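(* Let $G$ be a graph with $k=\chi(G)$ that has, up to permutation of the colours, exactly two proper $k$-colourings (i.e. exactly two partitions of $V(G)$ into $k$ independent sets). Then for every proper $k$-colouring $c$ of $G$ there exists a critical set for $(G,c)$ of cardinality $\chi(G)$.
   Context: All graphs are finite and simple. A proper $k$-colouring of $G=(V,E)$ is a map $c:V\to[k]$ with $c(u)\neq c(v)$ for every edge $uv$. A set $S\subseteq V$ is a determining set for $(G,c)$ if there is no proper $k$-colouring $c'\neq c$ of $G$ with $c'(s)=c(s)$ for all $s\in S$; a critical set for $(G,c)$ is an inclusion-minimal determining set. *)

theory Defs
  imports Main
begin

definition simple_graph :: "'a set \<Rightarrow> ('a \<Rightarrow> 'a \<Rightarrow> bool) \<Rightarrow> bool" where
  "simple_graph V E \<longleftrightarrow> finite V \<and> (\<forall>u v. E u v \<longrightarrow> E v u) \<and> (\<forall>v. \<not> E v v)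
     \<and> (\<forall>u v. E u v \<longrightarrow> u \<in> V \<and> v \<in> V)"

definition proper_col :: "'a set \<Rightarrow> ('a \<Rightarrow> 'a \<Rightarrow> bool) \<Rightarrow> nat \<Rightarrow> ('a \<Rightarrow> nat) \<Rightarrow> bool" where
  "proper_col V E k c \<longleftrightarrow> (\<forall>v\<in>V. c v \<in> {1..k}) \<and> (\<forall>u\<in>V. \<forall>v\<in>V. E u v \<longrightarrow> c u \<noteq> c v)"

definition chromatic_number :: "'a set \<Rightarrow> ('a \<Rightarrow> 'a \<Rightarrow> bool) \<Rightarrow> nat" where
  "chromatic_number V E = (LEAST k. \<exists>c. proper_col V E k c)"

definition colour_partition :: "'a set \<Rightarrow> nat \<Rightarrow> ('a \<Rightarrow> nat) \<Rightarrow> 'a set set" where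
  "colour_partition V k c = {{v \<in> V. c v = i} | i. i \<in> {1..k}} - {{}}"

definition determining_set ::
  "'a set \<Rightarrow> ('a \<Rightarrow> 'a \<Rightarrow> bool) \<Rightarrow> nat \<Rightarrow> ('a \<Rightarrow> nat) \<Rightarrow> 'a set \<Rightarrow> bool" where
  "determining_set V E k c S \<longleftrightarrow> S \<subseteq> V \<and>
     \<not> (\<exists>c'. proper_col V E k c' \<and> (\<exists>v\<in>V. c' v \<noteq> c v) \<and> (\<forall>s\<in>S. c' s = c s))"

definition critical_set ::
  "'a set \<Rightarrow> ('a \<Rightarrow> 'a \<Rightarrow> bool) \<Rightarrow> nat \<Rightarrow> ('a \<Rightarrow> nat) \<Rightarrow> 'a set \<Rightarrow> bool" where
  "critical_set V E k c S \<longleftrightarrow> determining_set V E k c S \<and>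
     (\<forall>T. T \<subset> S \<longrightarrow> \<not> determining_set V E k c T)"

end

theory Submission
  imports Defs "HOL-Combinatorics.Transposition"
begin

text \<open>Let \<open>d\<close> be a proper \<open>k\<close>-colouring whose partition differs from that of \<open>c\<close>. Since
  \<open>k = \<chi>(G)\<close>, the classes of any set \<open>J\<close> of \<open>c\<close>-colours meet at least \<open>|J|\<close> colours of \<open>d\<close>:
  otherwise they could be recoloured with fewer colours, leaving a colour unused. By Hall's
  theorem there are a permutation \<open>\<sigma>\<close> of \<open>[k]\<close> and vertices \<open>x\<^sub>m\<close> with \<open>c(x\<^sub>m) = m\<close> and
  \<open>d(x\<^sub>m) = \<sigma>(m)\<close>. As the partitions differ, some vertex \<open>u\<close> has \<open>d(u) = \<sigma>(l)\<close> with
  \<open>l \<noteq> c(u)\<close>; then \<open>S = {u} \<union> {x\<^sub>m | m \<noteq> l}\<close> has \<open>k\<close> elements. A colouring agreeing with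
  \<open>c\<close> on \<open>S\<close> has the classes of \<open>c\<close> or of \<open>d\<close>; the former forces it to be \<open>c\<close>, the latter
  would put \<open>u\<close> and \<open>x\<^bsub>c(u)\<^esub>\<close> into one class of \<open>d\<close>. No proper subset of \<open>S\<close> is
  determining, as witnessed by \<open>\<sigma>\<^sup>-\<^sup>1 \<circ> d\<close> and by transpositions of colours applied to
  \<open>\<sigma>\<^sup>-\<^sup>1 \<circ> d\<close> and to \<open>c\<close>.\<close>

text \<open>The two reductions of the Halmos--Vaughan proof of Hall's theorem: if some nonempty proper
  subfamily \<open>J\<close> is tight, match \<open>J\<close> and then the rest with the neighbourhood of \<open>J\<close> removed;
  otherwise match one index to any candidate \<open>x\<close> and the rest with \<open>x\<close> removed.\<close>

lemma hall_condition_Diff_tight: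
  assumes "finite I" "\<forall>i\<in>I. finite (F i)"
    and hall: "\<And>K. K \<subseteq> I \<Longrightarrow> card K \<le> card (\<Union>(F ` K))"
    and tight: "J \<subseteq> I" "card (\<Union>(F ` J)) \<le> card J"
    and "K \<subseteq> I - J"
  shows "card K \<le> card (\<Union>i\<in>K. F i - \<Union>(F ` J))"
proof -
  have "K \<union> J \<subseteq> I"
    using tight(1) assms(6) by blast
  then have "finite (K \<union> J)"
    using assms(1) by (rule finite_subset)
  then have fin: "finite K" "finite J" "finite (\<Union>(F ` (K \<union> J)))"
    using assms(2) \<open>K \<union> J \<subseteq> I\<close> by auto
  have "card (\<Union>i\<in>K. F i - \<Union>(F ` J)) = card (\<Union>(F ` (K \<union> J)) - \<Union>(F ` J))"
    by (rule arg_cong[where f = card]) blast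
  also have "\<dots> = card (\<Union>(F ` (K \<union> J))) - card (\<Union>(F ` J))"
    using fin(3) by (intro card_Diff_subset) (auto intro: finite_subset)
  finally have "card (\<Union>i\<in>K. F i - \<Union>(F ` J)) = card (\<Union>(F ` (K \<union> J))) - card (\<Union>(F ` J))" .
  moreover have "card K + card J = card (K \<union> J)"
    using assms(6) fin by (intro card_Un_disjoint[symmetric]) auto
  moreover have "card (K \<union> J) \<le> card (\<Union>(F ` (K \<union> J)))"
    using hall \<open>K \<union> J \<subseteq> I\<close> .
  ultimately show ?thesis
    using tight(2) by linarith
qed

lemma hall_condition_Diff_point:
  assumes slack: "\<And>K. K \<noteq> {} \<Longrightarrow> K \<subset> I \<Longrightarrow> card K < card (\<Union>(F ` K))"
    and "i \<in> I" "K \<subseteq> I - {i}"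
  shows "card K \<le> card (\<Union>j\<in>K. F j - {x})"
proof (cases "K = {}")
  case False
  then have "card K < card (\<Union>(F ` K))"
    using slack assms(2,3) by blast
  moreover have "(\<Union>j\<in>K. F j - {x}) = \<Union>(F ` K) - {x}"
    by blast
  ultimately show ?thesis
    by (auto simp add: card_Diff_singleton_if)
qed simp

theorem hall_marriage:
  assumes "finite I" "\<forall>i\<in>I. finite (F i)"
    and "\<And>J. J \<subseteq> I \<Longrightarrow> card J \<le> card (\<Union>(F ` J))"
  shows "\<exists>f. inj_on f I \<and> (\<forall>i\<in>I. f i \<in> F i)"
  using assms
proof (induction I arbitrary: F rule: finite_psubset_induct)
  case (psubset I)
  consider (empty) "I = {}"
    | (tight) J where "J \<noteq> {}" "J \<subset> I" "card (\<Union>(F ` J)) \<le> card J"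
    | (slack) "I \<noteq> {}" "\<And>J. J \<noteq> {} \<Longrightarrow> J \<subset> I \<Longrightarrow> card J < card (\<Union>(F ` J))"
    by (meson not_le)
  then show ?case
  proof cases
    case empty
    then show ?thesis by simp
  next
    case tight
    have "I - J \<subset> I"
      using tight(1,2) by blast
    have "\<forall>i\<in>J. finite (F i)"
      using psubset.prems(1) tight(2) by blast
    moreover have "card K \<le> card (\<Union>(F ` K))" if "K \<subseteq> J" for K
      using that tight(2) by (intro psubset.prems(2)) blast
    ultimately obtain f1 where f1: "inj_on f1 J" "\<forall>i\<in>J. f1 i \<in> F i"
      using psubset.IH[OF tight(2)] by blast
    have "\<forall>i\<in>I - J. finite (F i - \<Union>(F ` J))"
      using psubset.prems(1) by blast
    then obtain f2 where f2: "inj_on f2 (I - J)" "\<forall>i\<in>I - J. f2 i \<in> F i - \<Union>(F ` J)"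
      using psubset.IH[OF \<open>I - J \<subset> I\<close> _
          hall_condition_Diff_tight[OF psubset(1) psubset.prems psubset_imp_subset[OF tight(2)] tight(3)]]
      by blast
    define f where "f i = (if i \<in> J then f1 i else f2 i)" for i
    have "inj_on f J" "inj_on f (I - J)"
      using f1(1) f2(1) inj_on_cong[of J f f1] inj_on_cong[of "I - J" f f2] by (auto simp: f_def)
    moreover have "f ` J \<subseteq> \<Union>(F ` J)" "f ` (I - J) \<inter> \<Union>(F ` J) = {}"
      using f1(2) f2(2) by (auto simp: f_def)
    ultimately have "inj_on f (J \<union> (I - J))"
      unfolding inj_on_Un by blast
    moreover have "J \<union> (I - J) = I"
      using tight(2) by blast
    moreover have "\<forall>i\<in>I. f i \<in> F i"
      using f1(2) f2(2) by (simp add: f_def)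
    ultimately show ?thesis
      by auto
  next
    case slack
    then obtain i where i: "i \<in> I" by blast
    then have "1 \<le> card (F i)"
      using psubset.prems(2)[of "{i}"] by simp
    then obtain x where x: "x \<in> F i"
      by fastforce
    have "I - {i} \<subset> I"
      using i by blast
    moreover have "\<forall>j\<in>I - {i}. finite (F j - {x})"
      using psubset.prems(1) by blast
    ultimately obtain f where f: "inj_on f (I - {i})" "\<forall>j\<in>I - {i}. f j \<in> F j - {x}"
      using psubset.IH[OF _ _ hall_condition_Diff_point[OF slack(2) i]] by blast
    have "inj_on (f(i := x)) (insert i (I - {i}))"
      using f by (auto simp: inj_on_def)
    moreover have "insert i (I - {i}) = I"
      using i by blast
    ultimately show ?thesis
      using f(2) x by auto
  qed
qed

lemma proper_col_image: "proper_col V E k c \<Longrightarrow> c ` V \<subseteq> {1..k}"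
  by (auto simp: proper_col_def)

lemma proper_col_comp:
  assumes "proper_col V E k c" "inj_on \<rho> {1..k}" "\<rho> ` {1..k} \<subseteq> {1..k}"
  shows "proper_col V E k (\<rho> \<circ> c)"
  unfolding proper_col_def
proof (intro conjI ballI impI)
  fix v assume "v \<in> V"
  then have "c v \<in> {1..k}"
    using assms(1) by (simp add: proper_col_def)
  then show "(\<rho> \<circ> c) v \<in> {1..k}"
    using assms(3) unfolding comp_apply by blast
next
  fix u v assume "u \<in> V" "v \<in> V" "E u v"
  then have "c u \<noteq> c v" "c u \<in> {1..k}" "c v \<in> {1..k}"
    using assms(1) by (auto simp: proper_col_def)
  then show "(\<rho> \<circ> c) u \<noteq> (\<rho> \<circ> c) v"
    using inj_on_eq_iff[OF assms(2)] by simp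
qed

lemma chromatic_number_le: "proper_col V E k c \<Longrightarrow> chromatic_number V E \<le> k"
  unfolding chromatic_number_def by (rule Least_le) blast

lemma proper_col_merge_unused_colour:
  assumes "proper_col V E k c" "j \<in> {1..k}" "\<forall>v\<in>V. c v \<noteq> j"
  shows "proper_col V E (k - 1) (\<lambda>v. if c v = k then j else c v)"
  unfolding proper_col_def
proof (intro conjI ballI impI)
  fix v assume "v \<in> V"
  then have "c v \<in> {1..k}" "c v \<noteq> j"
    using assms(1,3) by (auto simp: proper_col_def)
  then show "(if c v = k then j else c v) \<in> {1..k - 1}"
    using assms(2) by auto
next
  fix u v assume "u \<in> V" "v \<in> V" "E u v"
  then have "c u \<noteq> c v" "c u \<noteq> j" "c v \<noteq> j"
    using assms(1,3) by (auto simp: proper_col_def)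
  then show "(if c u = k then j else c u) \<noteq> (if c v = k then j else c v)"
    by simp
qed

lemma chromatic_colouring_uses_all_colours:
  assumes "k = chromatic_number V E" "proper_col V E k c" "j \<in> {1..k}"
  shows "\<exists>v\<in>V. c v = j"
proof (rule ccontr)
  assume "\<not> (\<exists>v\<in>V. c v = j)"
  then have "chromatic_number V E \<le> k - 1"
    using proper_col_merge_unused_colour[OF assms(2,3)] chromatic_number_le by blast
  then show False
    using assms(1,3) by simp
qed

definition same_classes :: "'a set \<Rightarrow> ('a \<Rightarrow> nat) \<Rightarrow> ('a \<Rightarrow> nat) \<Rightarrow> bool" where
  "same_classes V c d \<longleftrightarrow> (\<forall>u\<in>V. \<forall>v\<in>V. c u = c v \<longleftrightarrow> d u = d v)"

lemma colour_partition_eq_classes: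
  assumes "c ` V \<subseteq> {1..k}"
  shows "colour_partition V k c = (\<lambda>u. {v \<in> V. c v = c u}) ` V"
  using assms unfolding colour_partition_def by fastforce

lemma colour_partition_eq_iff_same_classes:
  assumes "c ` V \<subseteq> {1..k}" "d ` V \<subseteq> {1..k}"
  shows "colour_partition V k c = colour_partition V k d \<longleftrightarrow> same_classes V c d"
proof
  assume eq: "colour_partition V k c = colour_partition V k d"
  have "{v \<in> V. c v = c u} = {v \<in> V. d v = d u}" if "u \<in> V" for u
  proof -
    have "{v \<in> V. c v = c u} \<in> colour_partition V k d"
      unfolding eq[symmetric] colour_partition_eq_classes[OF assms(1)] using that by (rule imageI)
    then obtain w where w: "{v \<in> V. c v = c u} = {v \<in> V. d v = d w}"
      unfolding colour_partition_eq_classes[OF assms(2)] by (rule imageE)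
    then have "d u = d w"
      using that by blast
    then show ?thesis
      using w by simp
  qed
  then show "same_classes V c d"
    unfolding same_classes_def by blast
next
  assume "same_classes V c d"
  then have "{v \<in> V. c v = c u} = {v \<in> V. d v = d u}" if "u \<in> V" for u
    using that unfolding same_classes_def by blast
  then show "colour_partition V k c = colour_partition V k d"
    unfolding colour_partition_eq_classes[OF assms(1)] colour_partition_eq_classes[OF assms(2)]
    by (intro image_cong) simp_all
qed

lemma same_classes_inj_comp:
  assumes "inj_on \<sigma> (c ` V)" "\<forall>v\<in>V. d v = \<sigma> (c v)"
  shows "same_classes V c d"
  unfolding same_classes_def
proof (intro ballI)
  fix u v assume "u \<in> V" "v \<in> V"
  then show "c u = c v \<longleftrightarrow> d u = d v"
    using assms(2) inj_on_eq_iff[OF assms(1)] by simp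
qed

lemma card_2_obtain_other:
  assumes "card P = 2" "a \<in> P"
  obtains b where "P = {a, b}" "a \<noteq> b"
  using assms by (auto simp: card_2_iff)

lemma two_colour_partitions_obtain:
  assumes "card {colour_partition V k c' | c'. proper_col V E k c'} = 2" "proper_col V E k c"
  obtains d where "proper_col V E k d" "\<not> same_classes V c d"
    "\<And>c'. proper_col V E k c' \<Longrightarrow> same_classes V c' c \<or> same_classes V c' d"
proof -
  let ?P = "colour_partition V k ` Collect (proper_col V E k)"
  have "{colour_partition V k c' | c'. proper_col V E k c'} = ?P"
    by blast
  then have "card ?P = 2"
    using assms(1) by simp
  moreover have "colour_partition V k c \<in> ?P"
    using assms(2) by simp
  ultimately obtain X where P: "?P = {colour_partition V k c, X}" "X \<noteq> colour_partition V k c"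
    by (metis card_2_obtain_other)
  then obtain d where d: "proper_col V E k d" "X = colour_partition V k d"
    by (metis imageE insertCI mem_Collect_eq)
  have same_iff: "same_classes V c1 c2 \<longleftrightarrow> colour_partition V k c1 = colour_partition V k c2"
    if "proper_col V E k c1" "proper_col V E k c2" for c1 c2
    using colour_partition_eq_iff_same_classes[OF proper_col_image proper_col_image, OF that] ..
  show ?thesis
  proof
    show "\<not> same_classes V c d"
      using same_iff[OF assms(2) d(1)] P(2) d(2) by simp
    fix c' assume c': "proper_col V E k c'"
    then have "colour_partition V k c' \<in> {colour_partition V k c, colour_partition V k d}"
      using P(1) d(2) by (metis imageI mem_Collect_eq)
    then show "same_classes V c' c \<or> same_classes V c' d"
      using same_iff[OF c' assms(2)] same_iff[OF c' d(1)] by blast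
  qed (rule d(1))
qed

lemma proper_col_recolour_classes:
  assumes "proper_col V E k c" "proper_col V E k d" "J \<subseteq> {1..k}"
    and "inj_on g (d ` {v \<in> V. c v \<in> J})" "g ` d ` {v \<in> V. c v \<in> J} \<subseteq> J"
  shows "proper_col V E k (\<lambda>v. if c v \<in> J then g (d v) else c v)"
proof -
  have g_into: "g (d v) \<in> J" if "v \<in> V" "c v \<in> J" for v
    using assms(5) that by blast
  show ?thesis
    unfolding proper_col_def
  proof (intro conjI ballI impI)
    fix v assume "v \<in> V"
    show "(if c v \<in> J then g (d v) else c v) \<in> {1..k}"
    proof (cases "c v \<in> J")
      case True
      then show ?thesis
        using g_into[OF \<open>v \<in> V\<close> True] assms(3) by (subst if_P) blast+
    next
      case False
      then show ?thesis
        using proper_col_image[OF assms(1)] \<open>v \<in> V\<close> by (subst if_not_P) blast+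
    qed
  next
    fix u v assume "u \<in> V" "v \<in> V" "E u v"
    then have "c u \<noteq> c v" "d u \<noteq> d v"
      using assms(1,2) by (auto simp: proper_col_def)
    moreover have "g (d u) \<noteq> g (d v)" if "c u \<in> J" "c v \<in> J"
      using inj_on_eq_iff[OF assms(4)] \<open>d u \<noteq> d v\<close> \<open>u \<in> V\<close> \<open>v \<in> V\<close> that by blast
    ultimately show "(if c u \<in> J then g (d u) else c u) \<noteq> (if c v \<in> J then g (d v) else c v)"
      using g_into[OF \<open>u \<in> V\<close>] g_into[OF \<open>v \<in> V\<close>] by auto
  qed
qed

lemma chromatic_hall_condition:
  assumes "k = chromatic_number V E" "proper_col V E k c" "proper_col V E k d" "J \<subseteq> {1..k}"
  shows "card J \<le> card (d ` {v \<in> V. c v \<in> J})"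
proof (rule ccontr)
  let ?N = "d ` {v \<in> V. c v \<in> J}"
  assume "\<not> card J \<le> card ?N"
  then have less: "card ?N < card J"
    by simp
  have "?N \<subseteq> {1..k}"
    using proper_col_image[OF assms(3)] by blast
  then have fin: "finite ?N" "finite J"
    using assms(4) by (auto intro: finite_subset)
  then obtain g where g: "g ` ?N \<subseteq> J" "inj_on g ?N"
    using card_le_inj[OF fin less_imp_le[OF less]] by metis
  have "\<not> J \<subseteq> g ` ?N"
  proof
    assume "J \<subseteq> g ` ?N"
    then have "card J \<le> card (g ` ?N)"
      using finite_imageI[OF fin(1)] by (rule card_mono[rotated])
    then show False
      using less card_image[OF g(2)] by simp
  qed
  then obtain j where j: "j \<in> J" "j \<notin> g ` ?N"
    by blast
  then have "j \<in> {1..k}"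
    using assms(4) by blast
  moreover have "proper_col V E k (\<lambda>v. if c v \<in> J then g (d v) else c v)"
    using proper_col_recolour_classes[OF assms(2-4) g(2,1)] .
  ultimately obtain v where v: "v \<in> V" "(if c v \<in> J then g (d v) else c v) = j"
    using chromatic_colouring_uses_all_colours[OF assms(1)] by blast
  show False
  proof (cases "c v \<in> J")
    case True
    then have "g (d v) \<in> g ` ?N"
      using v(1) by (intro imageI) simp
    then show False
      using True v(2) j(2) by simp
  next
    case False
    then show False
      using v j(1) by simp
  qed
qed

lemma chromatic_colourings_matching:
  assumes "finite V" "k = chromatic_number V E" "proper_col V E k c" "proper_col V E k d"
  obtains \<sigma> x where "bij_betw \<sigma> {1..k} {1..k}"
    "\<And>m. m \<in> {1..k} \<Longrightarrow> x m \<in> V \<and> c (x m) = m \<and> d (x m) = \<sigma> m"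
proof -
  let ?F = "\<lambda>m. d ` {v \<in> V. c v = m}"
  have "\<exists>\<sigma>. inj_on \<sigma> {1..k} \<and> (\<forall>m\<in>{1..k}. \<sigma> m \<in> ?F m)"
  proof (rule hall_marriage)
    show "\<forall>m\<in>{1..k}. finite (?F m)"
      using assms(1) by simp
    fix J assume "J \<subseteq> {1..k}"
    moreover have "\<Union>(?F ` J) = d ` {v \<in> V. c v \<in> J}"
      by blast
    ultimately show "card J \<le> card (\<Union>(?F ` J))"
      using chromatic_hall_condition[OF assms(2-4)] by simp
  qed simp
  then obtain \<sigma> where \<sigma>: "inj_on \<sigma> {1..k}" "\<forall>m\<in>{1..k}. \<sigma> m \<in> ?F m"
    by blast
  have "\<sigma> ` {1..k} \<subseteq> {1..k}"
    using \<sigma>(2) proper_col_image[OF assms(4)] by blast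
  then have "bij_betw \<sigma> {1..k} {1..k}"
    using \<sigma>(1) endo_inj_surj[of "{1..k}" \<sigma>] by (simp add: bij_betw_def)
  moreover have "\<forall>m\<in>{1..k}. \<exists>v. v \<in> V \<and> c v = m \<and> d v = \<sigma> m"
    using \<sigma>(2) by force
  then obtain x where "\<forall>m\<in>{1..k}. x m \<in> V \<and> c (x m) = m \<and> d (x m) = \<sigma> m"
    using bchoice by metis
  ultimately show ?thesis
    using that by blast
qed

lemma proper_col_transpose:
  assumes "proper_col V E k c" "a \<in> {1..k}" "b \<in> {1..k}"
  shows "proper_col V E k (transpose a b \<circ> c)"
  using proper_col_comp[OF assms(1)] assms(2,3) by simp

lemma critical_setI:
  assumes "determining_set V E k c S"
    and "\<And>s. s \<in> S \<Longrightarrow> \<exists>c'. proper_col V E k c' \<and> c' s \<noteq> c s \<and> (\<forall>y\<in>S - {s}. c' y = c y)"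
  shows "critical_set V E k c S"
  unfolding critical_set_def
proof (intro conjI allI impI assms(1))
  fix T assume "T \<subset> S"
  then obtain s where s: "s \<in> S" "s \<notin> T"
    by blast
  then obtain c' where c': "proper_col V E k c'" "c' s \<noteq> c s" "\<forall>y\<in>S - {s}. c' y = c y"
    using assms(2) by blast
  have "s \<in> V"
    using assms(1) s(1) by (auto simp: determining_set_def)
  then show "\<not> determining_set V E k c T"
    unfolding determining_set_def using c' \<open>T \<subset> S\<close> s(2) by blast
qed

locale matched_transversal =
  fixes V :: "'a set" and E :: "'a \<Rightarrow> 'a \<Rightarrow> bool" and k :: nat
    and c d :: "'a \<Rightarrow> nat" and \<sigma> :: "nat \<Rightarrow> nat" and x :: "nat \<Rightarrow> 'a" and u :: 'a and l :: nat
  assumes proper_c: "proper_col V E k c" and proper_d: "proper_col V E k d"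
    and dichotomy: "\<And>c'. proper_col V E k c' \<Longrightarrow> same_classes V c' c \<or> same_classes V c' d"
    and bij_\<sigma>: "bij_betw \<sigma> {1..k} {1..k}"
    and transversal: "\<And>m. m \<in> {1..k} \<Longrightarrow> x m \<in> V \<and> c (x m) = m \<and> d (x m) = \<sigma> m"
    and u: "u \<in> V" and l: "l \<in> {1..k}" "\<sigma> l = d u" "l \<noteq> c u"
begin

definition S :: "'a set" where
  "S = insert u (x ` ({1..k} - {l}))"

lemma x_in_V: "m \<in> {1..k} \<Longrightarrow> x m \<in> V"
  and c_x: "m \<in> {1..k} \<Longrightarrow> c (x m) = m"
  and d_x: "m \<in> {1..k} \<Longrightarrow> d (x m) = \<sigma> m"
  using transversal by blast+

lemma c_u: "c u \<in> {1..k}"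
  using proper_col_image[OF proper_c] u by blast

lemma x_in_S: "m \<in> {1..k} \<Longrightarrow> m \<noteq> l \<Longrightarrow> x m \<in> S"
  unfolding S_def by blast

lemma u_notin_x_image: "u \<notin> x ` ({1..k} - {l})"
proof
  assume "u \<in> x ` ({1..k} - {l})"
  then obtain m where m: "m \<in> {1..k}" "m \<noteq> l" "u = x m"
    by blast
  then have "\<sigma> m = \<sigma> l"
    using d_x l(2) by simp
  then show False
    using inj_on_eq_iff[OF bij_betw_imp_inj_on[OF bij_\<sigma>] m(1) l(1)] m(2) by simp
qed

lemma S_subset: "S \<subseteq> V"
  unfolding S_def using u x_in_V by blast

lemma card_S: "card S = k"
proof -
  have "inj_on x {1..k}"
    using c_x by (rule inj_on_inverseI)
  then have "card (x ` ({1..k} - {l})) = k - 1"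
    using l(1) by (simp add: card_image inj_on_diff)
  then show ?thesis
    unfolding S_def using u_notin_x_image l(1) by simp
qed

lemma determining_set_S: "determining_set V E k c S"
  unfolding determining_set_def
proof (intro conjI S_subset notI)
  assume "\<exists>c'. proper_col V E k c' \<and> (\<exists>v\<in>V. c' v \<noteq> c v) \<and> (\<forall>s\<in>S. c' s = c s)"
  then obtain c' v where c': "proper_col V E k c'" "\<forall>s\<in>S. c' s = c s" and v: "v \<in> V" "c' v \<noteq> c v"
    by blast
  have c'_x: "c' (x m) = m" if "m \<in> {1..k}" "m \<noteq> l" for m
    using c'(2) x_in_S[OF that] c_x[OF that(1)] by simp
  from dichotomy[OF c'(1)] show False
  proof
    assume same: "same_classes V c' c"
    \<comment> \<open>compare \<open>v\<close> with \<open>x (c v)\<close> if \<open>c v \<noteq> l\<close>, and with \<open>x (c' v)\<close> otherwise\<close>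
    have "c v \<in> {1..k}" "c' v \<in> {1..k}"
      using proper_col_image[OF proper_c] proper_col_image[OF c'(1)] v(1) by blast+
    moreover have "c' v = c' (x m) \<longleftrightarrow> c v = m" if "m \<in> {1..k}" for m
      using same v(1) x_in_V[OF that] c_x[OF that] unfolding same_classes_def by metis
    ultimately show False
      using c'_x v(2) by metis
  next
    assume same: "same_classes V c' d"
    have "c' u = c' (x (c u))"
      using c'(2) c'_x[OF c_u l(3)[symmetric]] u unfolding S_def by simp
    then have "d u = \<sigma> (c u)"
      using same u x_in_V[OF c_u] d_x[OF c_u] unfolding same_classes_def by metis
    then show False
      using inj_on_eq_iff[OF bij_betw_imp_inj_on[OF bij_\<sigma>] l(1) c_u] l(2,3) by simp
  qed
qed

definition \<tau> :: "nat \<Rightarrow> nat" where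
  "\<tau> = inv_into {1..k} \<sigma>"

lemma proper_\<tau>_d: "proper_col V E k (\<tau> \<circ> d)"
proof -
  have "bij_betw \<tau> {1..k} {1..k}"
    unfolding \<tau>_def by (rule bij_betw_inv_into[OF bij_\<sigma>])
  then show ?thesis
    using proper_col_comp[OF proper_d bij_betw_imp_inj_on equalityD1[OF bij_betw_imp_surj_on]] by blast
qed

lemma \<tau>_d_x:
  assumes "m \<in> {1..k}"
  shows "\<tau> (d (x m)) = m"
  unfolding \<tau>_def d_x[OF assms] using bij_\<sigma> assms by (rule bij_betw_inv_into_left)

lemma \<tau>_d_u: "\<tau> (d u) = l"
  unfolding \<tau>_def l(2)[symmetric] using bij_\<sigma> l(1) by (rule bij_betw_inv_into_left)

lemma recolouring_at_u:
  "\<exists>c'. proper_col V E k c' \<and> c' u \<noteq> c u \<and> (\<forall>y\<in>S - {u}. c' y = c y)"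
proof -
  have "\<forall>y\<in>S - {u}. (\<tau> \<circ> d) y = c y"
    using \<tau>_d_x c_x unfolding S_def by auto
  moreover have "(\<tau> \<circ> d) u \<noteq> c u"
    using \<tau>_d_u l(3) by simp
  ultimately show ?thesis
    using proper_\<tau>_d by blast
qed

lemma recolouring_at_x_c_u:
  "\<exists>c'. proper_col V E k c' \<and> c' (x (c u)) \<noteq> c (x (c u)) \<and> (\<forall>y\<in>S - {x (c u)}. c' y = c y)"
proof -
  let ?c' = "transpose (c u) l \<circ> (\<tau> \<circ> d)"
  have "?c' y = c y" if y: "y \<in> S - {x (c u)}" for y
  proof -
    consider "y = u" | m where "m \<in> {1..k}" "m \<noteq> l" "m \<noteq> c u" "y = x m"
      using y unfolding S_def by blast
    then show ?thesis
      using \<tau>_d_u \<tau>_d_x c_x by cases auto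
  qed
  moreover have "?c' (x (c u)) \<noteq> c (x (c u))"
    using \<tau>_d_x[OF c_u] c_x[OF c_u] l(3) by simp
  ultimately show ?thesis
    using proper_col_transpose[OF proper_\<tau>_d c_u l(1)] by blast
qed

lemma recolouring_at_x_other:
  assumes "m \<in> {1..k}" "m \<noteq> l" "m \<noteq> c u"
  shows "\<exists>c'. proper_col V E k c' \<and> c' (x m) \<noteq> c (x m) \<and> (\<forall>y\<in>S - {x m}. c' y = c y)"
proof -
  let ?c' = "transpose m l \<circ> c"
  have "?c' y = c y" if y: "y \<in> S - {x m}" for y
  proof -
    consider "y = u" | m' where "m' \<in> {1..k}" "m' \<noteq> l" "m' \<noteq> m" "y = x m'"
      using y unfolding S_def by blast
    then show ?thesis
      using assms(3) l(3) c_x by cases auto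
  qed
  moreover have "?c' (x m) \<noteq> c (x m)"
    using assms c_x by simp
  ultimately show ?thesis
    using proper_col_transpose[OF proper_c assms(1) l(1)] by blast
qed

lemma recolouring_at:
  assumes "s \<in> S"
  shows "\<exists>c'. proper_col V E k c' \<and> c' s \<noteq> c s \<and> (\<forall>y\<in>S - {s}. c' y = c y)"
proof -
  consider "s = u" | "s = x (c u)" | m where "m \<in> {1..k}" "m \<noteq> l" "m \<noteq> c u" "s = x m"
    using assms unfolding S_def by blast
  then show ?thesis
    using recolouring_at_u recolouring_at_x_c_u recolouring_at_x_other by cases blast+
qed

lemma critical_set_S: "critical_set V E k c S"
  using determining_set_S recolouring_at by (rule critical_setI)

end

theorem proposition8:
  fixes V :: "'a set" and E :: "'a \<Rightarrow> 'a \<Rightarrow> bool" and k :: nat and c :: "'a \<Rightarrow> nat"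
  assumes "simple_graph V E"
    and "k = chromatic_number V E"
    and "card {colour_partition V k c' | c'. proper_col V E k c'} = 2"
    and "proper_col V E k c"
  shows "\<exists>S. critical_set V E k c S \<and> card S = chromatic_number V E"
proof -
  have "finite V"
    using assms(1) by (simp add: simple_graph_def)
  obtain d where d: "proper_col V E k d" "\<not> same_classes V c d"
    and dichotomy: "\<And>c'. proper_col V E k c' \<Longrightarrow> same_classes V c' c \<or> same_classes V c' d"
    using two_colour_partitions_obtain[OF assms(3,4)] by blast
  obtain \<sigma> x where \<sigma>: "bij_betw \<sigma> {1..k} {1..k}"
    and x: "\<And>m. m \<in> {1..k} \<Longrightarrow> x m \<in> V \<and> c (x m) = m \<and> d (x m) = \<sigma> m"
    using chromatic_colourings_matching[OF \<open>finite V\<close> assms(2,4) d(1)] by blast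
  have "inj_on \<sigma> (c ` V)"
    using bij_betw_imp_inj_on[OF \<sigma>] proper_col_image[OF assms(4)] by (rule inj_on_subset)
  then obtain u where u: "u \<in> V" "d u \<noteq> \<sigma> (c u)"
    using same_classes_inj_comp d(2) by blast
  then obtain l where l: "l \<in> {1..k}" "\<sigma> l = d u"
    using bij_betw_imp_surj_on[OF \<sigma>] proper_col_image[OF d(1)] by (metis image_iff image_subset_iff)
  then have "l \<noteq> c u"
    using u(2) by auto
  interpret matched_transversal V E k c d \<sigma> x u l
    by unfold_locales (fact assms(4) d(1) dichotomy \<sigma> x u(1) l \<open>l \<noteq> c u\<close>)+
  show ?thesis
    using critical_set_S card_S assms(2) by blast
qed

end
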